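(* Let $B_0,\ldots,B_N$, $T$, $\mathcal{F}$, $e$ be as in the context, let $\boldsymbol\lambda=(\lambda_1,\ldots,\lambda_m)$ be a stable non-resonant vector of eigenvalues with all $\lambda_i\ne0$, and let $C$ be a constant with $\|T(\boldsymbol\lambda^\alpha)^{-1}\|\le C|\boldsymbol\lambda^\alpha|^{-e}$ for all $|\alpha|\ge2$ (operator norm with respect to $\|\cdot\|_\infty$). Suppose $0<\mu\le\min\{|\lambda_1|^e,\ldots,|\lambda_m|^e\}$. Define $K$ on $H$ by $K\varphi=\sum_{|\alpha|\ge2}z^\alpha T(\boldsymbol\lambda^\alpha)^{-1}\varphi_\alpha$ for $\varphi=\sum_{|\alpha|\ge2}z^\alpha\varphi_\alpha$. Then $K$ is a bounded linear operator $H\to H(\mu)$ which inverts $D\Phi(0)$ (i.e. $\sum_{i=0}^NB_i(K\varphi)(\Lambda^iz)=\varphi(z)$ for $\|z\|_\infty\le\mu$, with $\Lambda=\mathrm{diag}(\lambda_1,\ldots,\lambda_m)$), and the composition $\Delta_\mu K:H\to H$ is bounded with $\|\Delta_\mu K\|\le C$.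
   Context: $T(\lambda)=\sum_{i=0}^N\lambda^iB_i$, $\mathcal{F}(\lambda)=\det T(\lambda)=\lambda^eg(\lambda)$ with $g(0)\neq0$ ($e$ maximal). A vector $\boldsymbol\lambda\in\mathbb{C}^m$ is a stable non-resonant vector of eigenvalues if $|\lambda_i|<1$, $\mathcal{F}(\lambda_i)=0$, and $\mathcal{F}(\boldsymbol\lambda^\alpha)\ne0$ for all $|\alpha|\ge2$; $\boldsymbol\lambda^\alpha=\prod\lambda_i^{\alpha_i}$. Sup norm $\|\cdot\|_\infty$ on $\mathbb{C}^s$. For $\mu>0$, $H(\mu)$ is the Banach space of functions $P(z)=\sum_{k\ge2}\sum_{|\alpha|=k}z^\alpha P_\alpha$ on $\{z\in\mathbb{C}^m:\|z\|_\infty\le\mu\}$ with values in $\mathbb{C}^d$ and norm $\|P\|_\mu=\sum_{k\ge2}\sum_{|\alpha|=k}\mu^k\|P_\alpha\|_\infty<\infty$; $H=H(1)$ with norm $\|\cdot\|_1$. $\Delta_\mu:H(\mu)\to H$ is $\Delta_\mu[\varphi](z)=\varphi(\mu z)$. $D\Phi(0)$ is the linear operator $\varphi\mapsto\sum_{i=0}^NB_i\,\varphi\circ\Lambda^i$. *)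

theory Defs
  imports "HOL-Analysis.Analysis" "HOL-Computational_Algebra.Polynomial"
begin

definition supnorm :: "complex^'s \<Rightarrow> real" where
  "supnorm v = Max (range (\<lambda>i. norm (v $ i)))"

definition opnorm_inf :: "complex^'s^'s \<Rightarrow> real" where
  "opnorm_inf A = Sup {supnorm (A *v x) | x. supnorm x \<le> 1}"

definition Tpoly :: "nat \<Rightarrow> (nat \<Rightarrow> complex^'d^'d) \<Rightarrow> complex \<Rightarrow> complex^'d^'d" where
  "Tpoly N B x = (\<chi> i j. \<Sum>k\<le>N. x ^ k * (B k $ i $ j))"

definition mdeg :: "('m::finite \<Rightarrow> nat) \<Rightarrow> nat" where
  "mdeg \<alpha> = (\<Sum>j\<in>UNIV. \<alpha> j)"

definition mpow :: "complex^'m \<Rightarrow> ('m::finite \<Rightarrow> nat) \<Rightarrow> complex" where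
  "mpow z \<alpha> = (\<Prod>j\<in>UNIV. (z $ j) ^ (\<alpha> j))"

text \<open>Elements of H(mu) are represented by their coefficient families
  P = sum_{|alpha|>=2} z^alpha P_alpha.\<close>
definition inH :: "real \<Rightarrow> (('m::finite \<Rightarrow> nat) \<Rightarrow> complex^'d) \<Rightarrow> bool" where
  "inH \<mu> P \<longleftrightarrow> (\<forall>\<alpha>. mdeg \<alpha> < 2 \<longrightarrow> P \<alpha> = 0) \<and>
      (\<lambda>\<alpha>. \<mu> ^ mdeg \<alpha> * supnorm (P \<alpha>)) summable_on UNIV"

definition normH :: "real \<Rightarrow> (('m::finite \<Rightarrow> nat) \<Rightarrow> complex^'d) \<Rightarrow> real" where
  "normH \<mu> P = (\<Sum>\<^sub>\<infinity>\<alpha>. \<mu> ^ mdeg \<alpha> * supnorm (P \<alpha>))"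

definition evalH :: "(('m::finite \<Rightarrow> nat) \<Rightarrow> complex^'d) \<Rightarrow> complex^'m \<Rightarrow> complex^'d" where
  "evalH P z = (\<Sum>\<^sub>\<infinity>\<alpha>. mpow z \<alpha> *s P \<alpha>)"

text \<open>Delta_mu[phi](z) = phi(mu z), on coefficients: P_alpha |-> mu^|alpha| P_alpha.\<close>
definition DeltaH :: "real \<Rightarrow> (('m::finite \<Rightarrow> nat) \<Rightarrow> complex^'d) \<Rightarrow> (('m \<Rightarrow> nat) \<Rightarrow> complex^'d)" where
  "DeltaH \<mu> P = (\<lambda>\<alpha>. (complex_of_real \<mu>) ^ mdeg \<alpha> *s P \<alpha>)"

definition Kop :: "nat \<Rightarrow> (nat \<Rightarrow> complex^'d^'d) \<Rightarrow> complex^'m \<Rightarrow>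
    (('m::finite \<Rightarrow> nat) \<Rightarrow> complex^'d) \<Rightarrow> (('m \<Rightarrow> nat) \<Rightarrow> complex^'d)" where
  "Kop N B lam \<phi> = (\<lambda>\<alpha>. if mdeg \<alpha> \<ge> 2 then matrix_inv (Tpoly N B (mpow lam \<alpha>)) *v \<phi> \<alpha> else 0)"

definition diagpow :: "complex^'m \<Rightarrow> nat \<Rightarrow> complex^'m \<Rightarrow> complex^'m" where
  "diagpow lam i z = (\<chi> j. (lam $ j) ^ i * z $ j)"

end

theory Submission
  imports Defs
begin

(* Since (\<Lambda>^i z)^\<alpha> = (\<lambda>^\<alpha>)^i z^\<alpha>, the operator D\<Phi>(0) acts diagonally on monomials:
   z^\<alpha> v is sent to z^\<alpha> T(\<lambda>^\<alpha>) v.  Hence K, which inverts T(\<lambda>^\<alpha>) coefficientwise, inverts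
   D\<Phi>(0) term by term, and absolute convergence on the polydisc of radius \<mu> lets the finite sum
   over i pass through the series.  For the bound, the weight \<mu>^|\<alpha>| \<le> |\<lambda>^\<alpha>|^e exactly cancels
   the growth |\<lambda>^\<alpha>|^-e of the inverse, so \<parallel>\<Delta>_\<mu> K \<phi>\<parallel>_1 = \<parallel>K \<phi>\<parallel>_\<mu> \<le> C \<parallel>\<phi>\<parallel>_1. *)

lemma supnorm_ge: "norm (v $ i) \<le> supnorm v"
  unfolding supnorm_def by (rule Max_ge) auto

lemma supnorm_nonneg: "0 \<le> supnorm v"
  using supnorm_ge[of v] norm_ge_zero order_trans by blast

lemma supnorm_le: "(\<And>i. norm (v $ i) \<le> c) \<Longrightarrow> supnorm v \<le> c"
  unfolding supnorm_def by (subst Max_le_iff) auto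

lemma supnorm_zero [simp]: "supnorm 0 = 0"
  by (metis antisym supnorm_le supnorm_nonneg norm_zero zero_index order_refl)

lemma supnorm_eq_0_iff: "supnorm v = 0 \<longleftrightarrow> v = 0"
  by (metis supnorm_zero supnorm_ge norm_le_zero_iff vec_eq_iff zero_index)

lemma supnorm_smult: "supnorm (c *s v) = cmod c * supnorm v"
proof (rule antisym)
  show "supnorm (c *s v) \<le> cmod c * supnorm v"
    by (rule supnorm_le) (simp add: norm_mult mult_left_mono supnorm_ge)
  have "supnorm v \<in> range (\<lambda>i. norm (v $ i))"
    unfolding supnorm_def by (rule Max_in) auto
  then obtain i where "supnorm v = norm (v $ i)" by auto
  then show "cmod c * supnorm v \<le> supnorm (c *s v)"
    using supnorm_ge[of "c *s v" i] by (simp add: norm_mult)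
qed

lemma norm_le_card_supnorm: "norm (v::complex^'d) \<le> of_nat CARD('d) * supnorm v"
proof -
  have "norm v \<le> (\<Sum>i\<in>UNIV. norm (v $ i))"
    by (simp add: norm_vec_def L2_set_le_sum)
  also have "\<dots> \<le> (\<Sum>i\<in>(UNIV::'d set). supnorm v)"
    by (rule sum_mono) (rule supnorm_ge)
  finally show ?thesis by simp
qed

lemma supnorm_matrix_vector_mult_le:
  "supnorm ((A::complex^'n^'k) *v x) \<le> (\<Sum>i\<in>UNIV. \<Sum>j\<in>UNIV. norm (A $ i $ j)) * supnorm x"
proof (rule supnorm_le)
  fix i
  have "norm ((A *v x) $ i) \<le> (\<Sum>j\<in>UNIV. norm (A $ i $ j) * supnorm x)"
    unfolding matrix_vector_mult_def vec_lambda_beta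
    by (rule order_trans[OF norm_sum], rule sum_mono) (simp add: norm_mult mult_left_mono supnorm_ge)
  also have "\<dots> \<le> (\<Sum>i\<in>UNIV. \<Sum>j\<in>UNIV. norm (A $ i $ j)) * supnorm x"
    unfolding sum_distrib_right[symmetric]
    by (intro mult_right_mono[OF _ supnorm_nonneg] member_le_sum) (auto intro: sum_nonneg)
  finally show "norm ((A *v x) $ i) \<le> \<dots>" .
qed

lemma bdd_above_opnorm_inf: "bdd_above {supnorm ((A::complex^'s^'s) *v x) | x. supnorm x \<le> 1}"
proof -
  have "supnorm (A *v x) \<le> (\<Sum>i\<in>UNIV. \<Sum>j\<in>UNIV. norm (A $ i $ j))" if "supnorm x \<le> 1" for x
    using supnorm_matrix_vector_mult_le[of A x] supnorm_nonneg[of x] that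
    by (simp add: mult_left_le sum_nonneg order_trans)
  then show ?thesis unfolding bdd_above_def by blast
qed

lemma opnorm_inf_ge: "supnorm x \<le> 1 \<Longrightarrow> supnorm ((A::complex^'s^'s) *v x) \<le> opnorm_inf A"
  unfolding opnorm_inf_def by (rule cSup_upper[OF _ bdd_above_opnorm_inf]) auto

lemma opnorm_inf_nonneg: "0 \<le> opnorm_inf (A::complex^'s^'s)"
  using opnorm_inf_ge[of 0 A] by simp

lemma supnorm_matrix_vector_mult_le_opnorm_inf:
  "supnorm ((A::complex^'s^'s) *v x) \<le> opnorm_inf A * supnorm x"
proof (cases "x = 0")
  case False
  then have s: "supnorm x > 0"
    using supnorm_nonneg[of x] supnorm_eq_0_iff[of x] by linarith
  have "supnorm (A *v x) / supnorm x = supnorm (A *v (complex_of_real (1 / supnorm x) *s x))"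
    using s by (simp add: vector_scalar_commute supnorm_smult norm_divide)
  also have "\<dots> \<le> opnorm_inf A"
    using s by (intro opnorm_inf_ge) (simp add: supnorm_smult norm_divide)
  finally show ?thesis
    using s by (simp add: divide_le_eq mult.commute)
qed simp

lemma matrix_inv_right_apply:
  assumes "det (A::complex^'n^'n) \<noteq> 0"
  shows "A *v (matrix_inv A *v v) = v"
proof -
  have "invertible A" using assms invertible_det_nz by blast
  then have "A ** matrix_inv A = mat 1"
    unfolding matrix_inv_def invertible_def by (rule someI2_ex) auto
  then show ?thesis by (simp add: matrix_vector_mul_assoc)
qed

lemma Tpoly_apply: "Tpoly N B c *v v = (\<Sum>k\<le>N. c ^ k *s (B k *v v))"
  by (simp add: vec_eq_iff Tpoly_def matrix_vector_mult_def sum_component sum_distrib_left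
      sum_distrib_right mult_ac sum.swap[of _ "{..N}"])

lemma norm_mpow: "cmod (mpow z \<alpha>) = (\<Prod>j\<in>UNIV. cmod (z $ j) ^ \<alpha> j)"
  by (simp add: mpow_def prod_norm[symmetric] norm_power)

lemma mpow_nonzero: "(\<And>j. z $ j \<noteq> 0) \<Longrightarrow> mpow z \<alpha> \<noteq> 0"
  by (simp add: mpow_def)

lemma mpow_diagpow: "mpow (diagpow lam i z) \<alpha> = mpow lam \<alpha> ^ i * mpow z \<alpha>"
  by (simp add: mpow_def diagpow_def power_mult_distrib prod.distrib prod_power_distrib
      power_mult[symmetric] mult.commute)

lemma power_mdeg_eq_prod: "(r::real) ^ mdeg \<alpha> = (\<Prod>j\<in>UNIV. r ^ \<alpha> j)"
  by (simp add: mdeg_def power_sum)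

lemma norm_mpow_le:
  assumes "supnorm z \<le> r"
  shows "cmod (mpow z \<alpha>) \<le> r ^ mdeg \<alpha>"
  unfolding norm_mpow power_mdeg_eq_prod
  by (rule prod_mono) (use supnorm_ge[of z] assms in \<open>auto intro!: power_mono intro: order_trans\<close>)

lemma power_mdeg_le_norm_mpow_power:
  assumes "\<And>j. r \<le> cmod (z $ j) ^ e" and "0 \<le> r"
  shows "r ^ mdeg \<alpha> \<le> cmod (mpow z \<alpha>) ^ e"
proof -
  have "r ^ mdeg \<alpha> \<le> (\<Prod>j\<in>UNIV. (cmod (z $ j) ^ e) ^ \<alpha> j)"
    unfolding power_mdeg_eq_prod by (rule prod_mono) (use assms in \<open>auto intro: power_mono\<close>)
  also have "\<dots> = cmod (mpow z \<alpha>) ^ e"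
    by (simp add: norm_mpow prod_power_distrib power_mult[symmetric] mult.commute)
  finally show ?thesis .
qed

lemma supnorm_diagpow_le:
  assumes "\<And>j. cmod (lam $ j) \<le> 1"
  shows "supnorm (diagpow lam i z) \<le> supnorm z"
proof (rule supnorm_le)
  fix j
  have "cmod (lam $ j) ^ i * cmod (z $ j) \<le> 1 * supnorm z"
    using assms supnorm_ge[of z j] by (intro mult_mono power_le_one) auto
  then show "cmod (diagpow lam i z $ j) \<le> supnorm z"
    by (simp add: diagpow_def norm_mult norm_power)
qed

lemma has_sum_sum_family:
  fixes f :: "'i \<Rightarrow> 'a \<Rightarrow> 'b::topological_comm_monoid_add"
  assumes "finite I" and "\<And>i. i \<in> I \<Longrightarrow> (f i has_sum S i) A"
  shows "((\<lambda>x. \<Sum>i\<in>I. f i x) has_sum (\<Sum>i\<in>I. S i)) A"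
  using assms by (induction I rule: finite_induct) (simp_all add: has_sum_add)

lemma evalH_has_sum:
  fixes P :: "('m::finite \<Rightarrow> nat) \<Rightarrow> complex^'d"
  assumes "inH r P" and "supnorm z \<le> r"
  shows "((\<lambda>\<alpha>. mpow z \<alpha> *s P \<alpha>) has_sum evalH P z) UNIV"
proof -
  have "(\<lambda>\<alpha>. mpow z \<alpha> *s P \<alpha>) summable_on UNIV"
  proof (rule abs_summable_summable, rule summable_on_comparison_test)
    show "(\<lambda>\<alpha>. of_nat CARD('d) * (r ^ mdeg \<alpha> * supnorm (P \<alpha>))) summable_on UNIV"
      using assms(1) by (intro summable_on_cmult_right) (simp add: inH_def)
    fix \<alpha>
    have "norm (mpow z \<alpha> *s P \<alpha>) \<le> of_nat CARD('d) * supnorm (mpow z \<alpha> *s P \<alpha>)"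
      by (rule norm_le_card_supnorm)
    also have "\<dots> \<le> of_nat CARD('d) * (r ^ mdeg \<alpha> * supnorm (P \<alpha>))"
      unfolding supnorm_smult
      by (intro mult_left_mono mult_right_mono norm_mpow_le assms(2) supnorm_nonneg) simp
    finally show "norm (mpow z \<alpha> *s P \<alpha>) \<le> of_nat CARD('d) * (r ^ mdeg \<alpha> * supnorm (P \<alpha>))" .
  qed simp
  then show ?thesis by (simp add: evalH_def)
qed

lemma sum_B_evalH_diagpow:
  assumes "inH r \<psi>" and "supnorm z \<le> r" and "\<And>j. cmod (lam $ j) \<le> 1"
  shows "(\<Sum>i\<le>N. B i *v evalH \<psi> (diagpow lam i z))
    = evalH (\<lambda>\<alpha>. Tpoly N B (mpow lam \<alpha>) *v \<psi> \<alpha>) z"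
proof -
  have "((\<lambda>\<alpha>. B i *v (mpow (diagpow lam i z) \<alpha> *s \<psi> \<alpha>))
      has_sum B i *v evalH \<psi> (diagpow lam i z)) UNIV" for i
    using has_sum_bounded_linear[of "\<lambda>x. B i *v x",
        OF _ evalH_has_sum[OF assms(1) order_trans[OF supnorm_diagpow_le[OF assms(3)] assms(2)]]]
    by (simp add: linear_conv_bounded_linear)
  then have "((\<lambda>\<alpha>. \<Sum>i\<le>N. B i *v (mpow (diagpow lam i z) \<alpha> *s \<psi> \<alpha>))
      has_sum (\<Sum>i\<le>N. B i *v evalH \<psi> (diagpow lam i z))) UNIV"
    by (simp add: has_sum_sum_family)
  moreover have "(\<Sum>i\<le>N. B i *v (mpow (diagpow lam i z) \<alpha> *s \<psi> \<alpha>))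
      = mpow z \<alpha> *s (Tpoly N B (mpow lam \<alpha>) *v \<psi> \<alpha>)" for \<alpha>
  proof -
    have "(\<Sum>i\<le>N. B i *v (mpow (diagpow lam i z) \<alpha> *s \<psi> \<alpha>))
        = mpow z \<alpha> *s (\<Sum>i\<le>N. mpow lam \<alpha> ^ i *s (B i *v \<psi> \<alpha>))"
      unfolding mpow_diagpow
      by (simp add: vec_eq_iff vector_scalar_commute sum_component sum_distrib_left mult_ac)
    then show ?thesis by (simp add: Tpoly_apply)
  qed
  ultimately show ?thesis by (simp add: evalH_def infsumI)
qed

lemma inH_normH_le:
  assumes "inH s \<phi>" and "0 \<le> r" and "\<forall>\<alpha>. mdeg \<alpha> < 2 \<longrightarrow> \<psi> \<alpha> = 0"
    and "\<forall>\<alpha>. 2 \<le> mdeg \<alpha> \<longrightarrow> r ^ mdeg \<alpha> * supnorm (\<psi> \<alpha>) \<le> C * (s ^ mdeg \<alpha> * supnorm (\<phi> \<alpha>))"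
  shows "inH r \<psi> \<and> normH r \<psi> \<le> C * normH s \<phi>"
proof -
  have le: "r ^ mdeg \<alpha> * supnorm (\<psi> \<alpha>) \<le> C * (s ^ mdeg \<alpha> * supnorm (\<phi> \<alpha>))" for \<alpha>
    using assms(1,3,4) by (cases "2 \<le> mdeg \<alpha>") (auto simp: inH_def)
  have \<phi>_summable: "(\<lambda>\<alpha>. C * (s ^ mdeg \<alpha> * supnorm (\<phi> \<alpha>))) summable_on UNIV"
    using assms(1) by (intro summable_on_cmult_right) (simp add: inH_def)
  have \<psi>_summable: "(\<lambda>\<alpha>. r ^ mdeg \<alpha> * supnorm (\<psi> \<alpha>)) summable_on UNIV"
    by (rule summable_on_comparison_test[OF \<phi>_summable le]) (simp add: assms(2) supnorm_nonneg)
  have "normH r \<psi> \<le> (\<Sum>\<^sub>\<infinity>\<alpha>. C * (s ^ mdeg \<alpha> * supnorm (\<phi> \<alpha>)))"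
    unfolding normH_def by (rule infsum_mono[OF \<psi>_summable \<phi>_summable le])
  also have "\<dots> = C * normH s \<phi>"
    by (simp add: normH_def infsum_cmult_right')
  finally show ?thesis
    using \<psi>_summable assms(3) by (simp add: inH_def)
qed

lemma supnorm_DeltaH: "0 \<le> r \<Longrightarrow> supnorm (DeltaH r P \<alpha>) = r ^ mdeg \<alpha> * supnorm (P \<alpha>)"
  by (simp add: DeltaH_def supnorm_smult norm_power)

lemma inH_DeltaH: "0 < r \<Longrightarrow> inH 1 (DeltaH r P) \<longleftrightarrow> inH r P"
  by (simp add: inH_def supnorm_DeltaH) (simp add: DeltaH_def)

lemma normH_DeltaH: "0 \<le> r \<Longrightarrow> normH 1 (DeltaH r P) = normH r P"
  by (simp add: normH_def supnorm_DeltaH)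

lemma Kop_add: "Kop N B lam (\<lambda>\<alpha>. \<phi> \<alpha> + \<psi> \<alpha>) = (\<lambda>\<alpha>. Kop N B lam \<phi> \<alpha> + Kop N B lam \<psi> \<alpha>)"
  by (simp add: Kop_def fun_eq_iff matrix_vector_right_distrib)

lemma Kop_smult: "Kop N B lam (\<lambda>\<alpha>. c *s \<phi> \<alpha>) = (\<lambda>\<alpha>. c *s Kop N B lam \<phi> \<alpha>)"
  by (simp add: Kop_def fun_eq_iff vector_scalar_commute)

lemma Tpoly_Kop:
  assumes "inH r \<phi>" and "\<forall>\<alpha>. 2 \<le> mdeg \<alpha> \<longrightarrow> det (Tpoly N B (mpow lam \<alpha>)) \<noteq> 0"
  shows "Tpoly N B (mpow lam \<alpha>) *v Kop N B lam \<phi> \<alpha> = \<phi> \<alpha>"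
  using assms by (cases "2 \<le> mdeg \<alpha>") (auto simp: Kop_def inH_def matrix_inv_right_apply)

lemma Kop_coeff_le:
  assumes "2 \<le> mdeg \<alpha>"
    and "opnorm_inf (matrix_inv (Tpoly N B (mpow lam \<alpha>))) \<le> C * cmod (mpow lam \<alpha>) powi (- int e)"
    and "mpow lam \<alpha> \<noteq> 0" and "0 \<le> r" and "r ^ mdeg \<alpha> \<le> cmod (mpow lam \<alpha>) ^ e"
  shows "r ^ mdeg \<alpha> * supnorm (Kop N B lam \<phi> \<alpha>) \<le> C * supnorm (\<phi> \<alpha>)"
proof -
  define A \<rho> where "A = matrix_inv (Tpoly N B (mpow lam \<alpha>))" and "\<rho> = cmod (mpow lam \<alpha>)"
  have \<rho>: "0 < \<rho>" using assms(3) by (simp add: \<rho>_def)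
  have A: "opnorm_inf A \<le> C / \<rho> ^ e"
    using assms(2) by (simp add: A_def \<rho>_def power_int_minus divide_inverse)
  have "r ^ mdeg \<alpha> * supnorm (Kop N B lam \<phi> \<alpha>) \<le> \<rho> ^ e * (opnorm_inf A * supnorm (\<phi> \<alpha>))"
    using assms(1,4,5)
    by (intro mult_mono) (simp_all add: Kop_def A_def \<rho>_def supnorm_nonneg
        supnorm_matrix_vector_mult_le_opnorm_inf opnorm_inf_nonneg)
  also have "\<dots> \<le> \<rho> ^ e * (C / \<rho> ^ e * supnorm (\<phi> \<alpha>))"
    using \<rho> A by (intro mult_left_mono mult_right_mono supnorm_nonneg) simp_all
  also have "\<dots> = C * supnorm (\<phi> \<alpha>)"
    using \<rho> by simp
  finally show ?thesis .
qed

theorem mainTheorem11: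
  fixes N :: nat and B :: "nat \<Rightarrow> complex^'d^'d" and e :: nat and g :: "complex poly"
    and lam :: "complex^'m::finite" and C :: real and \<mu> :: real
  assumes detT: "\<forall>x. det (Tpoly N B x) = x ^ e * poly g x"
    and g0: "poly g 0 \<noteq> 0"
    and stable: "\<forall>j. cmod (lam $ j) < 1"
    and eig: "\<forall>j. det (Tpoly N B (lam $ j)) = 0"
    and nonres: "\<forall>\<alpha>. mdeg \<alpha> \<ge> 2 \<longrightarrow> det (Tpoly N B (mpow lam \<alpha>)) \<noteq> 0"
    and nonzero: "\<forall>j. lam $ j \<noteq> 0"
    and Cbound: "\<forall>\<alpha>. mdeg \<alpha> \<ge> 2 \<longrightarrow>
        opnorm_inf (matrix_inv (Tpoly N B (mpow lam \<alpha>))) \<le> C * cmod (mpow lam \<alpha>) powi (- int e)"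
    and mu_pos: "0 < \<mu>"
    and mu_le: "\<forall>j. \<mu> \<le> cmod (lam $ j) ^ e"
  shows "(\<forall>\<phi> \<psi>. Kop N B lam (\<lambda>\<alpha>. \<phi> \<alpha> + \<psi> \<alpha>) = (\<lambda>\<alpha>. Kop N B lam \<phi> \<alpha> + Kop N B lam \<psi> \<alpha>))
    \<and> (\<forall>(c::complex) \<phi>. Kop N B lam (\<lambda>\<alpha>. c *s \<phi> \<alpha>) = (\<lambda>\<alpha>. c *s Kop N B lam \<phi> \<alpha>))
    \<and> (\<exists>M. \<forall>\<phi>. inH 1 \<phi> \<longrightarrow> inH \<mu> (Kop N B lam \<phi>) \<and> normH \<mu> (Kop N B lam \<phi>) \<le> M * normH 1 \<phi>)
    \<and> (\<forall>\<phi>. inH 1 \<phi> \<longrightarrow> (\<forall>z. supnorm z \<le> \<mu> \<longrightarrow>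
          (\<Sum>i\<le>N. B i *v evalH (Kop N B lam \<phi>) (diagpow lam i z)) = evalH \<phi> z))
    \<and> (\<forall>\<phi>. inH 1 \<phi> \<longrightarrow> inH 1 (DeltaH \<mu> (Kop N B lam \<phi>)) \<and>
          normH 1 (DeltaH \<mu> (Kop N B lam \<phi>)) \<le> C * normH 1 \<phi>)"
proof -
  have \<mu>: "0 \<le> \<mu>" using mu_pos by simp
  have K_bounded: "inH \<mu> (Kop N B lam \<phi>) \<and> normH \<mu> (Kop N B lam \<phi>) \<le> C * normH 1 \<phi>"
    if "inH 1 \<phi>" for \<phi>
  proof (rule inH_normH_le[OF that \<mu>])
    show "\<forall>\<alpha>. mdeg \<alpha> < 2 \<longrightarrow> Kop N B lam \<phi> \<alpha> = 0"
      by (simp add: Kop_def)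
    show "\<forall>\<alpha>. 2 \<le> mdeg \<alpha> \<longrightarrow>
        \<mu> ^ mdeg \<alpha> * supnorm (Kop N B lam \<phi> \<alpha>) \<le> C * (1 ^ mdeg \<alpha> * supnorm (\<phi> \<alpha>))"
      using Cbound nonzero \<mu> mu_le
      by (auto intro!: Kop_coeff_le mpow_nonzero power_mdeg_le_norm_mpow_power)
  qed
  have K_inverts: "(\<Sum>i\<le>N. B i *v evalH (Kop N B lam \<phi>) (diagpow lam i z)) = evalH \<phi> z"
    if "inH 1 \<phi>" and "supnorm z \<le> \<mu>" for \<phi> z
    using sum_B_evalH_diagpow[OF conjunct1[OF K_bounded[OF that(1)]] that(2)]
      Tpoly_Kop[OF that(1) nonres] stable
    by (simp add: less_imp_le)
  show ?thesis
    using Kop_add Kop_smult K_bounded K_inverts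
    by (auto simp: inH_DeltaH normH_DeltaH mu_pos \<mu> intro!: exI[of _ C])
qed

end
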